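(* Fix $\varepsilon\ge0$. If $(\pi_1,\dots,\pi_N,\pi_c)\in\Pi^{N+1}$ satisfies $\max_{(s,a)}|\pi_i(s,a)-\pi_c(s,a)|\le\varepsilon$ for all $i$ (i.e. is feasible for the CAL problem), then there exist $\nu_i\in\mathbb{R}^{|\mathcal{S}|}$ and $\lambda_i\in\mathbb{R}^{|\mathcal{S}||\mathcal{A}|}$, $i=1,\dots,N$, such that $(\{\mu^{\pi_i}_i\}_{i=1}^N,\pi_c,\{\lambda_i\}_{i=1}^N,\{\nu_i\}_{i=1}^N)$ is feasible for the relaxed problem (R). Consequently, the optimal value of (R) is at most the optimal value of the CAL problem, where (R) is: minimize $\sum_{i=1}^N\|\Phi^\top\mu_i-\Phi^\top\mu^{\pi^{E_i}}_i\|_1$ over $\mu_i\in\mathbb{R}^{|\mathcal{S}||\mathcal{A}|}$, $\pi_c$, $\lambda_i\in\mathbb{R}^{|\mathcal{S}||\mathcal{A}|}$, $\nu_i\in\mathbb{R}^{|\mathcal{S}|}$ subject to: $\mu_i\in\mathcal{F}_i$ for all $i$; $\pi_c\in\Pi$; $\lambda_i\ge0$ for all $i$; $\nu_i(s)=\sum_{a\in\mathcal{A}}\mu_i(s,a)$ for all $i,s$; and for all $i$, $s\in\mathcal{S}$, $a\in\mathcal{A}$: $|\mu_i(s,a)-\lambda_i(s,a)|\le\varepsilon\,\nu_i(s)$, $\lambda_i(s,a)\ge\rho(s)\pi_c(s,a)$, $\lambda_i(s,a)\ge\nu_i(s)+\frac{|\mathcal{A}|}{1-\gamma}(\pi_c(s,a)-1)$,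 $\lambda_i(s,a)\le\nu_i(s)+\rho(s)(\pi_c(s,a)-1)$, $\lambda_i(s,a)\le\frac{|\mathcal{A}|}{1-\gamma}\pi_c(s,a)$.
   Context: Let $\mathcal{S},\mathcal{A}$ be finite sets, $\gamma\in(0,1)$, $\rho$ a probability distribution on $\mathcal{S}$, and for $i=1,\dots,N$ environment $i$ is the Markov decision process $(\mathcal{S},\mathcal{A},P^i,\gamma,\rho)$. $\Pi$ is the set of stationary policies $\pi:\mathcal{S}\to\Delta(\mathcal{A})$, $\pi(s,a)$ = probability of action $a$ at state $s$. $\mu^\pi_i(s,a)=\sum_{t\ge0}\gamma^t\mathbb{P}^{\pi,i}_\rho[s_t=s,a_t=a]$ is the discounted occupation measure (trajectory law: $s_0\sim\rho$, $a_t\sim\pi(s_t,\cdot)$, $s_{t+1}\sim P^i(\cdot\mid s_t,a_t)$). Let $P^i$ also denote the $|\mathcal{S}||\mathcal{A}|\times|\mathcal{S}|$ matrix with row $(s,a)$ equal to $P^i(\cdot\mid s,a)$, and $B\in\{0,1\}^{|\mathcal{S}||\mathcal{A}|\times|\mathcal{S}|}$ with $B_{(s_j,a_k),s_l}=1$ iff $j=l$; $\mathcal{F}_i=\{\mu\in\mathbb{R}^{|\mathcal{S}||\mathcal{A}|}_{\ge0}:(B-\gamma P^i)^\top\mu=\rho\}$. Expert policies $\pi^{E_i}\in\Pi$ and a cost basis matrix $\Phi\in\mathbb{R}^{|\mathcal{S}||\mathcal{A}|\times n_c}$ with columns of sup-norm at most $1$ are given. The CAL problem with parameter $\varepsilon\ge0$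 is: minimize $\sum_{i=1}^N\|\Phi^\top\mu^{\pi_i}_i-\Phi^\top\mu^{\pi^{E_i}}_i\|_1$ over $(\pi_1,\dots,\pi_N,\pi_c)\in\Pi^{N+1}$ subject to $\max_{(s,a)}|\pi_i(s,a)-\pi_c(s,a)|\le\varepsilon$ for all $i$. *)

theory Defs
  imports Complex_Main
begin

text \<open>States are a finite type 's, actions a finite type 'a. A transition kernel is
  P s a s' = P(s' | s,a). Environments, expert policies and optimisation variables are
  indexed by i < N (0-based).\<close>

definition is_policy :: "('s::finite \<Rightarrow> 'a::finite \<Rightarrow> real) \<Rightarrow> bool" where
  "is_policy \<pi> \<longleftrightarrow> (\<forall>s a. 0 \<le> \<pi> s a) \<and> (\<forall>s. (\<Sum>a\<in>UNIV. \<pi> s a) = 1)"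

definition is_distribution :: "('s::finite \<Rightarrow> real) \<Rightarrow> bool" where
  "is_distribution \<rho> \<longleftrightarrow> (\<forall>s. 0 \<le> \<rho> s) \<and> (\<Sum>s\<in>UNIV. \<rho> s) = 1"

definition is_kernel :: "('s::finite \<Rightarrow> 'a::finite \<Rightarrow> 's \<Rightarrow> real) \<Rightarrow> bool" where
  "is_kernel P \<longleftrightarrow> (\<forall>s a s'. 0 \<le> P s a s') \<and> (\<forall>s a. (\<Sum>s'\<in>UNIV. P s a s') = 1)"

fun state_law :: "('s::finite \<Rightarrow> 'a::finite \<Rightarrow> 's \<Rightarrow> real) \<Rightarrow> ('s \<Rightarrow> real)
    \<Rightarrow> ('s \<Rightarrow> 'a \<Rightarrow> real) \<Rightarrow> nat \<Rightarrow> 's \<Rightarrow> real" where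
  "state_law P \<rho> \<pi> 0 s = \<rho> s"
| "state_law P \<rho> \<pi> (Suc t) s' =
     (\<Sum>(s,a)\<in>UNIV. state_law P \<rho> \<pi> t s * \<pi> s a * P s a s')"

definition occ :: "('s::finite \<Rightarrow> 'a::finite \<Rightarrow> 's \<Rightarrow> real) \<Rightarrow> real \<Rightarrow> ('s \<Rightarrow> real)
    \<Rightarrow> ('s \<Rightarrow> 'a \<Rightarrow> real) \<Rightarrow> 's \<times> 'a \<Rightarrow> real" where
  "occ P \<gamma> \<rho> \<pi> = (\<lambda>(s,a). (\<Sum>t. \<gamma> ^ t * (state_law P \<rho> \<pi> t s * \<pi> s a)))"

text \<open>F_i = { mu >= 0 : (B - gamma P)^T mu = rho }, written out entrywise.\<close>
definition flow_set :: "('s::finite \<Rightarrow> 'a::finite \<Rightarrow> 's \<Rightarrow> real) \<Rightarrow> real \<Rightarrow> ('s \<Rightarrow> real)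
    \<Rightarrow> ('s \<times> 'a \<Rightarrow> real) set" where
  "flow_set P \<gamma> \<rho> = {\<mu>. (\<forall>x. 0 \<le> \<mu> x) \<and>
     (\<forall>s'. (\<Sum>(s,a)\<in>UNIV. ((if s = s' then 1 else 0) - \<gamma> * P s a s') * \<mu> (s,a)) = \<rho> s')}"

text \<open>|| Phi^T mu - Phi^T mu' ||_1 with Phi having columns k < nc.\<close>
definition feat_dist :: "('s::finite \<times> 'a::finite \<Rightarrow> nat \<Rightarrow> real) \<Rightarrow> nat
    \<Rightarrow> ('s \<times> 'a \<Rightarrow> real) \<Rightarrow> ('s \<times> 'a \<Rightarrow> real) \<Rightarrow> real" where
  "feat_dist \<Phi> nc \<mu> \<mu>' =
     (\<Sum>k<nc. \<bar>(\<Sum>x\<in>UNIV. \<Phi> x k * \<mu> x) - (\<Sum>x\<in>UNIV. \<Phi> x k * \<mu>' x)\<bar>)"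

definition CAL_feasible :: "nat \<Rightarrow> real \<Rightarrow> (nat \<Rightarrow> 's::finite \<Rightarrow> 'a::finite \<Rightarrow> real)
    \<Rightarrow> ('s \<Rightarrow> 'a \<Rightarrow> real) \<Rightarrow> bool" where
  "CAL_feasible N \<epsilon> \<pi>s \<pi>c \<longleftrightarrow>
     (\<forall>i<N. is_policy (\<pi>s i)) \<and> is_policy \<pi>c \<and>
     (\<forall>i<N. \<forall>s a. \<bar>\<pi>s i s a - \<pi>c s a\<bar> \<le> \<epsilon>)"

definition CAL_obj :: "nat \<Rightarrow> (nat \<Rightarrow> 's::finite \<Rightarrow> 'a::finite \<Rightarrow> 's \<Rightarrow> real) \<Rightarrow> real
    \<Rightarrow> ('s \<Rightarrow> real) \<Rightarrow> ('s \<times> 'a \<Rightarrow> nat \<Rightarrow> real) \<Rightarrow> nat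
    \<Rightarrow> (nat \<Rightarrow> 's \<Rightarrow> 'a \<Rightarrow> real) \<Rightarrow> (nat \<Rightarrow> 's \<Rightarrow> 'a \<Rightarrow> real) \<Rightarrow> real" where
  "CAL_obj N P \<gamma> \<rho> \<Phi> nc \<pi>E \<pi>s =
     (\<Sum>i<N. feat_dist \<Phi> nc (occ (P i) \<gamma> \<rho> (\<pi>s i)) (occ (P i) \<gamma> \<rho> (\<pi>E i)))"

definition R_feasible :: "nat \<Rightarrow> (nat \<Rightarrow> 's::finite \<Rightarrow> 'a::finite \<Rightarrow> 's \<Rightarrow> real) \<Rightarrow> real
    \<Rightarrow> ('s \<Rightarrow> real) \<Rightarrow> real
    \<Rightarrow> (nat \<Rightarrow> 's \<times> 'a \<Rightarrow> real) \<Rightarrow> ('s \<Rightarrow> 'a \<Rightarrow> real)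
    \<Rightarrow> (nat \<Rightarrow> 's \<times> 'a \<Rightarrow> real) \<Rightarrow> (nat \<Rightarrow> 's \<Rightarrow> real) \<Rightarrow> bool" where
  "R_feasible N P \<gamma> \<rho> \<epsilon> \<mu> \<pi>c lam \<nu> \<longleftrightarrow>
     (\<forall>i<N. \<mu> i \<in> flow_set (P i) \<gamma> \<rho>) \<and> is_policy \<pi>c \<and>
     (\<forall>i<N. \<forall>x. 0 \<le> lam i x) \<and>
     (\<forall>i<N. \<forall>s. \<nu> i s = (\<Sum>a\<in>UNIV. \<mu> i (s,a))) \<and>
     (\<forall>i<N. \<forall>s a.
        \<bar>\<mu> i (s,a) - lam i (s,a)\<bar> \<le> \<epsilon> * \<nu> i s \<and>
        lam i (s,a) \<ge> \<rho> s * \<pi>c s a \<and>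
        lam i (s,a) \<ge> \<nu> i s + real (card (UNIV :: 'a set)) / (1 - \<gamma>) * (\<pi>c s a - 1) \<and>
        lam i (s,a) \<le> \<nu> i s + \<rho> s * (\<pi>c s a - 1) \<and>
        lam i (s,a) \<le> real (card (UNIV :: 'a set)) / (1 - \<gamma>) * \<pi>c s a)"

definition R_obj :: "nat \<Rightarrow> (nat \<Rightarrow> 's::finite \<Rightarrow> 'a::finite \<Rightarrow> 's \<Rightarrow> real) \<Rightarrow> real
    \<Rightarrow> ('s \<Rightarrow> real) \<Rightarrow> ('s \<times> 'a \<Rightarrow> nat \<Rightarrow> real) \<Rightarrow> nat
    \<Rightarrow> (nat \<Rightarrow> 's \<Rightarrow> 'a \<Rightarrow> real) \<Rightarrow> (nat \<Rightarrow> 's \<times> 'a \<Rightarrow> real) \<Rightarrow> real" where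
  "R_obj N P \<gamma> \<rho> \<Phi> nc \<pi>E \<mu> =
     (\<Sum>i<N. feat_dist \<Phi> nc (\<mu> i) (occ (P i) \<gamma> \<rho> (\<pi>E i)))"

end

theory Submission imports Defs begin

text \<open>The occupation measure factors as \<open>\<mu>\<^sup>\<pi>(s,a) = d(s) \<pi>(s,a)\<close>, where \<open>d\<close> is the discounted
  state occupancy. It satisfies the Bellman flow equation (so \<open>\<mu>\<^sup>\<pi> \<in> \<F>\<close>) and
  \<open>\<rho>(s) \<le> d(s) \<le> 1/(1-\<gamma>) \<le> |\<A>|/(1-\<gamma>)\<close>. Taking \<open>\<nu> = d\<close> and \<open>\<lambda> = d \<pi>\<^sub>c\<close>, the coupling constraint
  becomes \<open>d |\<pi> - \<pi>\<^sub>c| \<le> \<epsilon> d\<close>, and the remaining four constraints are the McCormick envelope of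
  the bilinear term \<open>d \<pi>\<^sub>c\<close> over that box for \<open>d\<close> and \<open>0 \<le> \<pi>\<^sub>c \<le> 1\<close>. Hence every CAL-feasible point
  yields an (R)-feasible point with the same objective value, and the infimum over (R) can only
  be smaller.\<close>

definition state_occ :: "('s::finite \<Rightarrow> 'a::finite \<Rightarrow> 's \<Rightarrow> real) \<Rightarrow> real \<Rightarrow> ('s \<Rightarrow> real)
    \<Rightarrow> ('s \<Rightarrow> 'a \<Rightarrow> real) \<Rightarrow> 's \<Rightarrow> real" where
  "state_occ P \<gamma> \<rho> \<pi> s = (\<Sum>t. \<gamma> ^ t * state_law P \<rho> \<pi> t s)"

lemma sum_UNIV_prod:
  "(\<Sum>x\<in>(UNIV :: ('s::finite \<times> 'a::finite) set). f x) = (\<Sum>s\<in>UNIV. \<Sum>a\<in>UNIV. f (s,a))"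
  by (subst UNIV_Times_UNIV[symmetric], subst sum.cartesian_product) simp

lemma policy_le_1:
  assumes "is_policy \<pi>"
  shows "\<pi> s a \<le> 1"
proof -
  have "\<pi> s a \<le> (\<Sum>a\<in>UNIV. \<pi> s a)"
    using assms by (intro member_le_sum) (auto simp: is_policy_def)
  then show ?thesis
    using assms by (simp add: is_policy_def)
qed

context
  fixes P :: "'s::finite \<Rightarrow> 'a::finite \<Rightarrow> 's \<Rightarrow> real" and \<rho> :: "'s \<Rightarrow> real"
    and \<pi> :: "'s \<Rightarrow> 'a \<Rightarrow> real"
  assumes kernel: "is_kernel P" and policy: "is_policy \<pi>" and distribution: "is_distribution \<rho>"
begin

lemma state_law_nonneg: "0 \<le> state_law P \<rho> \<pi> t s"
  using kernel policy distribution
  by (induction t arbitrary: s)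
    (auto simp: is_kernel_def is_policy_def is_distribution_def intro!: sum_nonneg)

lemma sum_state_law: "(\<Sum>s\<in>UNIV. state_law P \<rho> \<pi> t s) = 1"
proof (induction t)
  case 0
  then show ?case
    using distribution by (simp add: is_distribution_def)
next
  case (Suc t)
  let ?L = "state_law P \<rho> \<pi> t"
  have "(\<Sum>s'\<in>UNIV. state_law P \<rho> \<pi> (Suc t) s')
      = (\<Sum>(s,a)\<in>UNIV. \<Sum>s'\<in>UNIV. ?L s * \<pi> s a * P s a s')"
    by (simp add: sum.swap[of _ UNIV "UNIV :: ('s \<times> 'a) set"] case_prod_beta')
  also have "\<dots> = (\<Sum>s\<in>UNIV. \<Sum>a\<in>UNIV. ?L s * \<pi> s a * (\<Sum>s'\<in>UNIV. P s a s'))"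
    by (simp add: sum_UNIV_prod sum_distrib_left)
  also have "\<dots> = (\<Sum>s\<in>UNIV. ?L s * (\<Sum>a\<in>UNIV. \<pi> s a))"
    using kernel by (simp add: is_kernel_def sum_distrib_left)
  also have "\<dots> = 1"
    using policy Suc by (simp add: is_policy_def)
  finally show ?case .
qed

lemma state_law_le_1: "state_law P \<rho> \<pi> t s \<le> 1"
proof -
  have "state_law P \<rho> \<pi> t s \<le> (\<Sum>s\<in>UNIV. state_law P \<rho> \<pi> t s)"
    by (rule member_le_sum) (auto intro: state_law_nonneg)
  then show ?thesis
    by (simp add: sum_state_law)
qed

context
  fixes \<gamma> :: real
  assumes discount: "0 < \<gamma>" "\<gamma> < 1"
begin

lemma summable_discounted_state_law: "summable (\<lambda>t. \<gamma> ^ t * state_law P \<rho> \<pi> t s)"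
proof (rule summable_comparison_test)
  show "summable (\<lambda>t. \<gamma> ^ t)"
    using discount by (simp add: summable_geometric)
  show "\<exists>N. \<forall>t\<ge>N. norm (\<gamma> ^ t * state_law P \<rho> \<pi> t s) \<le> \<gamma> ^ t"
    using state_law_nonneg state_law_le_1 discount by (auto simp: abs_mult intro!: mult_left_le)
qed

lemma state_occ_sums: "(\<lambda>t. \<gamma> ^ t * state_law P \<rho> \<pi> t s) sums state_occ P \<gamma> \<rho> \<pi> s"
  unfolding state_occ_def by (rule summable_sums[OF summable_discounted_state_law])

lemma occ_eq_state_occ: "occ P \<gamma> \<rho> \<pi> (s,a) = state_occ P \<gamma> \<rho> \<pi> s * \<pi> s a"
  using sums_unique[OF sums_mult2[OF state_occ_sums[of s], where c = "\<pi> s a"]]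
  by (simp add: occ_def mult.assoc)

lemma state_occ_bellman:
  "state_occ P \<gamma> \<rho> \<pi> s' =
     \<rho> s' + \<gamma> * (\<Sum>(s,a)\<in>UNIV. state_occ P \<gamma> \<rho> \<pi> s * \<pi> s a * P s a s')"
proof -
  let ?f = "\<lambda>t. \<gamma> ^ t * state_law P \<rho> \<pi> t s'"
  let ?g = "\<lambda>t. \<Sum>(s,a)\<in>UNIV. \<gamma> ^ t * state_law P \<rho> \<pi> t s * \<pi> s a * P s a s'"
  have "(\<lambda>t. \<gamma> ^ t * state_law P \<rho> \<pi> t s * \<pi> s a * P s a s') sums
      (state_occ P \<gamma> \<rho> \<pi> s * \<pi> s a * P s a s')" for s a
    by (intro sums_mult2 state_occ_sums)
  then have g_sums: "?g sums (\<Sum>(s,a)\<in>UNIV. state_occ P \<gamma> \<rho> \<pi> s * \<pi> s a * P s a s')"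
    by (auto intro!: sums_sum simp: case_prod_beta)
  have f_Suc: "(\<lambda>t. ?f (Suc t)) = (\<lambda>t. \<gamma> * ?g t)"
    by (simp add: sum_distrib_left case_prod_beta mult_ac)
  have "(\<lambda>t. ?f (Suc t)) sums
      (\<gamma> * (\<Sum>(s,a)\<in>UNIV. state_occ P \<gamma> \<rho> \<pi> s * \<pi> s a * P s a s'))"
    unfolding f_Suc by (rule sums_mult[OF g_sums])
  moreover have "(\<lambda>t. ?f (Suc t)) sums (state_occ P \<gamma> \<rho> \<pi> s' - ?f 0)"
    using sums_split_initial_segment[OF state_occ_sums, of 1] by simp
  ultimately show ?thesis
    using sums_unique2 by fastforce
qed

lemma state_occ_nonneg: "0 \<le> state_occ P \<gamma> \<rho> \<pi> s"
  unfolding state_occ_def using discount state_law_nonneg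
  by (intro suminf_nonneg summable_discounted_state_law) simp

lemma state_occ_ge: "\<rho> s \<le> state_occ P \<gamma> \<rho> \<pi> s"
proof -
  have "0 \<le> (\<Sum>(s',a)\<in>UNIV. state_occ P \<gamma> \<rho> \<pi> s' * \<pi> s' a * P s' a s)"
    using state_occ_nonneg policy kernel
    by (intro sum_nonneg) (auto simp: is_policy_def is_kernel_def)
  then show ?thesis
    using state_occ_bellman[of s] discount by simp
qed

lemma state_occ_le: "state_occ P \<gamma> \<rho> \<pi> s \<le> 1 / (1 - \<gamma>)"
proof -
  have "state_occ P \<gamma> \<rho> \<pi> s \<le> (\<Sum>t. \<gamma> ^ t)"
    unfolding state_occ_def
    using state_law_le_1 discount
    by (intro suminf_le summable_discounted_state_law)
      (auto simp: summable_geometric intro!: mult_left_le)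
  also have "\<dots> = 1 / (1 - \<gamma>)"
    using discount by (simp add: suminf_geometric)
  finally show ?thesis .
qed

lemma occ_in_flow_set: "occ P \<gamma> \<rho> \<pi> \<in> flow_set P \<gamma> \<rho>"
proof -
  let ?d = "state_occ P \<gamma> \<rho> \<pi>"
  have "0 \<le> occ P \<gamma> \<rho> \<pi> (s,a)" for s a
    using state_occ_ge distribution policy
    by (simp add: occ_eq_state_occ is_distribution_def is_policy_def)
      (meson order.trans mult_nonneg_nonneg)
  moreover have
    "(\<Sum>(s,a)\<in>UNIV. ((if s = s' then 1 else 0) - \<gamma> * P s a s') * occ P \<gamma> \<rho> \<pi> (s,a)) = \<rho> s'"
    for s'
  proof -
    have "(\<Sum>(s,a)\<in>UNIV. ((if s = s' then 1 else 0) - \<gamma> * P s a s') * occ P \<gamma> \<rho> \<pi> (s,a))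
        = (\<Sum>(s,a)\<in>UNIV. if s = s' then ?d s * \<pi> s a else 0)
          - \<gamma> * (\<Sum>(s,a)\<in>UNIV. ?d s * \<pi> s a * P s a s')"
      unfolding sum_distrib_left sum_subtractf[symmetric]
      by (intro sum.cong refl) (auto simp: occ_eq_state_occ algebra_simps)
    also have "(\<Sum>(s,a)\<in>UNIV. if s = s' then ?d s * \<pi> s a else 0) = (\<Sum>a\<in>UNIV. ?d s' * \<pi> s' a)"
      by (simp add: sum_UNIV_prod, subst sum.swap) simp
    also have "\<dots> = ?d s'"
      using policy by (simp add: sum_distrib_left[symmetric] is_policy_def)
    also have "\<gamma> * (\<Sum>(s,a)\<in>UNIV. ?d s * \<pi> s a * P s a s') = ?d s' - \<rho> s'"
      using state_occ_bellman[of s'] by simp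
    finally show ?thesis
      by simp
  qed
  ultimately show ?thesis
    by (auto simp: flow_set_def)
qed

end

end

lemma mccormick_envelope:
  fixes x y l u :: real
  assumes "l \<le> x" "x \<le> u" "0 \<le> y" "y \<le> 1"
  shows "l * y \<le> x * y" and "x + u * (y - 1) \<le> x * y"
    and "x * y \<le> x + l * (y - 1)" and "x * y \<le> u * y"
proof -
  have "0 \<le> (u - x) * (1 - y)" and "0 \<le> (x - l) * (1 - y)"
    using assms by simp_all
  then show "x + u * (y - 1) \<le> x * y" and "x * y \<le> x + l * (y - 1)"
    by (simp_all add: algebra_simps)
  show "l * y \<le> x * y" and "x * y \<le> u * y"
    using assms by (simp_all add: mult_right_mono)
qed

lemma R_feasible_of_CAL_feasible:
  fixes P :: "nat \<Rightarrow> 's::finite \<Rightarrow> 'a::finite \<Rightarrow> 's \<Rightarrow> real"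
  assumes "0 < \<gamma>" "\<gamma> < 1" and "is_distribution \<rho>"
    and "\<forall>i<N. is_kernel (P i)"
    and CAL: "CAL_feasible N \<epsilon> \<pi>s \<pi>c"
  defines "\<nu> \<equiv> \<lambda>i. state_occ (P i) \<gamma> \<rho> (\<pi>s i)"
  shows "R_feasible N P \<gamma> \<rho> \<epsilon> (\<lambda>i. occ (P i) \<gamma> \<rho> (\<pi>s i)) \<pi>c
           (\<lambda>i (s,a). \<nu> i s * \<pi>c s a) \<nu>"
  unfolding R_feasible_def prod.case
proof (intro conjI allI impI)
  show "is_policy \<pi>c"
    using CAL by (simp add: CAL_feasible_def)
  fix i assume "i < N"
  then have kernel: "is_kernel (P i)" and policy: "is_policy (\<pi>s i)"
    and close: "\<And>s a. \<bar>\<pi>s i s a - \<pi>c s a\<bar> \<le> \<epsilon>"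
    using assms by (auto simp: CAL_feasible_def)
  note facts = kernel policy \<open>is_distribution \<rho>\<close> \<open>0 < \<gamma>\<close> \<open>\<gamma> < 1\<close>
  have \<pi>c_range: "0 \<le> \<pi>c s a" "\<pi>c s a \<le> 1" for s a
    using CAL policy_le_1 by (auto simp: CAL_feasible_def is_policy_def)
  have \<nu>_ge: "\<rho> s \<le> \<nu> i s" for s
    unfolding \<nu>_def by (rule state_occ_ge[OF facts])
  have \<nu>_nonneg: "0 \<le> \<nu> i s" for s
    using \<nu>_ge[of s] \<open>is_distribution \<rho>\<close> by (simp add: is_distribution_def) (meson order.trans)
  have "1 / (1 - \<gamma>) \<le> real (card (UNIV :: 'a set)) / (1 - \<gamma>)"
    using \<open>\<gamma> < 1\<close> by (intro divide_right_mono) (simp_all add: Suc_le_eq finite_UNIV_card_ge_0)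
  then have \<nu>_le: "\<nu> i s \<le> real (card (UNIV :: 'a set)) / (1 - \<gamma>)" for s
    unfolding \<nu>_def using state_occ_le[OF facts, of s] by linarith
  show "occ (P i) \<gamma> \<rho> (\<pi>s i) \<in> flow_set (P i) \<gamma> \<rho>"
    by (rule occ_in_flow_set[OF facts])
  show "0 \<le> (case x of (s,a) \<Rightarrow> \<nu> i s * \<pi>c s a)" for x
    using \<nu>_nonneg \<pi>c_range by (auto split: prod.split)
  show "\<nu> i s = (\<Sum>a\<in>UNIV. occ (P i) \<gamma> \<rho> (\<pi>s i) (s,a))" for s
    using policy
    by (simp add: \<nu>_def occ_eq_state_occ[OF facts] sum_distrib_left[symmetric] is_policy_def)
  fix s a
  have "\<bar>occ (P i) \<gamma> \<rho> (\<pi>s i) (s,a) - \<nu> i s * \<pi>c s a\<bar> = \<nu> i s * \<bar>\<pi>s i s a - \<pi>c s a\<bar>"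
    using \<nu>_nonneg[of s]
    by (simp add: \<nu>_def occ_eq_state_occ[OF facts] right_diff_distrib[symmetric] abs_mult)
  also have "\<dots> \<le> \<epsilon> * \<nu> i s"
    using mult_left_mono[OF close \<nu>_nonneg] by (simp add: mult.commute)
  finally show "\<bar>occ (P i) \<gamma> \<rho> (\<pi>s i) (s,a) - \<nu> i s * \<pi>c s a\<bar> \<le> \<epsilon> * \<nu> i s" .
  show "\<rho> s * \<pi>c s a \<le> \<nu> i s * \<pi>c s a"
    and "\<nu> i s + real (card (UNIV :: 'a set)) / (1 - \<gamma>) * (\<pi>c s a - 1) \<le> \<nu> i s * \<pi>c s a"
    and "\<nu> i s * \<pi>c s a \<le> \<nu> i s + \<rho> s * (\<pi>c s a - 1)"
    and "\<nu> i s * \<pi>c s a \<le> real (card (UNIV :: 'a set)) / (1 - \<gamma>) * \<pi>c s a"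
    using mccormick_envelope[OF \<nu>_ge \<nu>_le \<pi>c_range] by simp_all
qed

lemma CAL_feasible_uniform:
  assumes "0 \<le> \<epsilon>"
  shows "CAL_feasible N \<epsilon> (\<lambda>i (s::'s::finite) (a::'a::finite). 1 / real (card (UNIV :: 'a set)))
           (\<lambda>s a. 1 / real (card (UNIV :: 'a set)))"
  using assms by (simp add: CAL_feasible_def is_policy_def)

lemma CAL_obj_eq_R_obj:
  "CAL_obj N P \<gamma> \<rho> \<Phi> nc \<pi>E \<pi>s = R_obj N P \<gamma> \<rho> \<Phi> nc \<pi>E (\<lambda>i. occ (P i) \<gamma> \<rho> (\<pi>s i))"
  by (simp add: CAL_obj_def R_obj_def)

lemma R_obj_nonneg: "0 \<le> R_obj N P \<gamma> \<rho> \<Phi> nc \<pi>E \<mu>"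
  by (auto simp: R_obj_def feat_dist_def intro!: sum_nonneg)

theorem proposition4:
  fixes N nc :: nat and \<gamma> \<epsilon> :: real
    and P :: "nat \<Rightarrow> 's::finite \<Rightarrow> 'a::finite \<Rightarrow> 's \<Rightarrow> real"
    and \<rho> :: "'s \<Rightarrow> real"
    and \<Phi> :: "'s \<times> 'a \<Rightarrow> nat \<Rightarrow> real"
    and \<pi>E :: "nat \<Rightarrow> 's \<Rightarrow> 'a \<Rightarrow> real"
  assumes "0 < \<gamma>" "\<gamma> < 1" "0 \<le> \<epsilon>"
    and "is_distribution \<rho>"
    and "\<forall>i<N. is_kernel (P i)"
    and "\<forall>i<N. is_policy (\<pi>E i)"
    and "\<forall>x. \<forall>k<nc. \<bar>\<Phi> x k\<bar> \<le> 1"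
  shows "(\<forall>\<pi>s \<pi>c. CAL_feasible N \<epsilon> \<pi>s \<pi>c \<longrightarrow>
            (\<exists>lam \<nu>. R_feasible N P \<gamma> \<rho> \<epsilon> (\<lambda>i. occ (P i) \<gamma> \<rho> (\<pi>s i)) \<pi>c lam \<nu>))
       \<and> Inf {R_obj N P \<gamma> \<rho> \<Phi> nc \<pi>E \<mu> | \<mu> \<pi>c lam \<nu>. R_feasible N P \<gamma> \<rho> \<epsilon> \<mu> \<pi>c lam \<nu>}
         \<le> Inf {CAL_obj N P \<gamma> \<rho> \<Phi> nc \<pi>E \<pi>s | \<pi>s \<pi>c. CAL_feasible N \<epsilon> \<pi>s \<pi>c}"
proof
  have relax: "\<exists>lam \<nu>. R_feasible N P \<gamma> \<rho> \<epsilon> (\<lambda>i. occ (P i) \<gamma> \<rho> (\<pi>s i)) \<pi>c lam \<nu>"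
    if "CAL_feasible N \<epsilon> \<pi>s \<pi>c" for \<pi>s \<pi>c
    using R_feasible_of_CAL_feasible[OF assms(1,2,4,5) that] by blast
  then show "\<forall>\<pi>s \<pi>c. CAL_feasible N \<epsilon> \<pi>s \<pi>c \<longrightarrow>
      (\<exists>lam \<nu>. R_feasible N P \<gamma> \<rho> \<epsilon> (\<lambda>i. occ (P i) \<gamma> \<rho> (\<pi>s i)) \<pi>c lam \<nu>)"
    by blast
  show "Inf {R_obj N P \<gamma> \<rho> \<Phi> nc \<pi>E \<mu> | \<mu> \<pi>c lam \<nu>. R_feasible N P \<gamma> \<rho> \<epsilon> \<mu> \<pi>c lam \<nu>}
      \<le> Inf {CAL_obj N P \<gamma> \<rho> \<Phi> nc \<pi>E \<pi>s | \<pi>s \<pi>c. CAL_feasible N \<epsilon> \<pi>s \<pi>c}"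
  proof (rule cInf_superset_mono)
    show "{CAL_obj N P \<gamma> \<rho> \<Phi> nc \<pi>E \<pi>s | \<pi>s \<pi>c. CAL_feasible N \<epsilon> \<pi>s \<pi>c} \<noteq> {}"
      using CAL_feasible_uniform[OF \<open>0 \<le> \<epsilon>\<close>] by blast
    show "bdd_below {R_obj N P \<gamma> \<rho> \<Phi> nc \<pi>E \<mu> | \<mu> \<pi>c lam \<nu>. R_feasible N P \<gamma> \<rho> \<epsilon> \<mu> \<pi>c lam \<nu>}"
      using R_obj_nonneg by (intro bdd_belowI[of _ 0]) blast
    show "{CAL_obj N P \<gamma> \<rho> \<Phi> nc \<pi>E \<pi>s | \<pi>s \<pi>c. CAL_feasible N \<epsilon> \<pi>s \<pi>c}
        \<subseteq> {R_obj N P \<gamma> \<rho> \<Phi> nc \<pi>E \<mu> | \<mu> \<pi>c lam \<nu>. R_feasible N P \<gamma> \<rho> \<epsilon> \<mu> \<pi>c lam \<nu>}"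
      unfolding CAL_obj_eq_R_obj using relax by blast
  qed
qed

end
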